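(* Let $k$ be a field of characteristic $0$, $m\ge 2$, and let $F_1,\dots,F_m\in k[X_1,\dots,X_m]$ be such that the determinant of the Jacobian matrix $\left(\partial F_i/\partial X_j\right)_{1\le i,j\le m}$ is a nonzero element of $k$. Then the system $$F_i(\mathcal{U}_1(t),\dots,\mathcal{U}_m(t))=tX_i+(1-t)F_i(X_1,\dots,X_m)\quad (1\le i\le m),$$ with initial conditions $\mathcal{U}_i(0)=X_i$ for $1\le i\le m$, has a unique solution $\mathcal{U}_1(t),\dots,\mathcal{U}_m(t)\in k[X_1,\dots,X_m][[t]]$, with $\mathcal{U}_i(t)=X_i+\sum_{j\ge1}u_{i,j}(X_1,\dots,X_m)t^j$ where $u_{i,j}\in k[X_1,\dots,X_m]$.
   Context: $k[X_1,\dots,X_m][[t]]$ denotes the ring of formal power series in $t$ with coefficients in $k[X_1,\dots,X_m]$; evaluation at $t=0$ means taking the constant term. *)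

theory Defs
  imports "HOL-Analysis.Analysis" "HOL-Library.Poly_Mapping"
    "HOL-Computational_Algebra.Formal_Power_Series"
begin

text \<open>Multivariate polynomials k[X_i : i in 'n] are represented as finitely supported
  maps from monomials (exponent vectors 'n =>0 nat) to coefficients; multiplication is
  the convolution product of HOL-Library.Poly_Mapping.\<close>

type_synonym ('n, 'a) mpoly = "('n \<Rightarrow>\<^sub>0 nat) \<Rightarrow>\<^sub>0 'a"

definition mp_const :: "'a::zero \<Rightarrow> ('n, 'a) mpoly" where
  "mp_const c = Poly_Mapping.single 0 c"

definition mp_var :: "'n \<Rightarrow> ('n, 'a::{zero,one}) mpoly" where
  "mp_var i = Poly_Mapping.single (Poly_Mapping.single i 1) 1"

definition mp_pderiv :: "'n \<Rightarrow> ('n, 'a::comm_semiring_1) mpoly \<Rightarrow> ('n, 'a) mpoly" where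
  "mp_pderiv j p = (\<Sum>\<mu>\<in>Poly_Mapping.keys p.
      Poly_Mapping.single (\<mu> - Poly_Mapping.single j 1)
        (of_nat (Poly_Mapping.lookup \<mu> j) * Poly_Mapping.lookup p \<mu>))"

definition mp_eval :: "('a \<Rightarrow> 'b::comm_semiring_1) \<Rightarrow> ('n::finite \<Rightarrow> 'b) \<Rightarrow> ('n, 'a::zero) mpoly \<Rightarrow> 'b" where
  "mp_eval \<phi> x p = (\<Sum>\<mu>\<in>Poly_Mapping.keys p. \<phi> (Poly_Mapping.lookup p \<mu>) * (\<Prod>i\<in>UNIV. x i ^ Poly_Mapping.lookup \<mu> i))"

definition mp_eval_fps :: "('n::finite \<Rightarrow> ('n, 'a::comm_ring_1) mpoly fps) \<Rightarrow> ('n, 'a) mpoly \<Rightarrow> ('n, 'a) mpoly fps" where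
  "mp_eval_fps U p = mp_eval (\<lambda>c. fps_const (mp_const c)) U p"

definition jacobian_det :: "('n::finite \<Rightarrow> ('n, 'a::comm_ring_1) mpoly) \<Rightarrow> ('n, 'a) mpoly" where
  "jacobian_det F = det (\<chi> i j. mp_pderiv j (F i))"

end

theory Submission
  imports Defs
begin

text \<open>The coefficients of the solution are found degree by degree, as in Newton's method or
  Hensel lifting. If U(0) = X and d is divisible by t^m with m \<ge> 1, then modulo t^(m+1)
  F(U + d) \<equiv> F(U) + J(U(0)) d = F(U) + J d, where J is the Jacobian matrix of F. Since
  det J is a unit of k[X], J is invertible over k[X], so the degree m coefficient of d is
  uniquely determined by the requirement that F(U + d) agree with the right-hand side up to
  degree m.\<close>

section \<open>Matrices with unit determinant\<close>

lemma right_invertible_if_det_mult_eq_1: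
  fixes A :: "'a::comm_ring_1^'n::finite^'n"
  assumes "det A * e = 1"
  shows "\<exists>C. A ** C = mat 1"
proof -
  \<comment> \<open>C is e times the adjugate of A; the sum over j below is a cofactor expansion along row k.\<close>
  define C :: "'a^'n^'n" where "C = (\<chi> j k. e * det (\<chi> i. if i = k then axis j 1 else row i A))"
  have "(A ** C) $ p $ k = mat 1 $ p $ k" for p k
  proof -
    have "(A ** C) $ p $ k = e * (\<Sum>j\<in>UNIV. A$p$j * det (\<chi> i. if i = k then axis j 1 else row i A))"
      by (simp add: C_def matrix_matrix_mult_def sum_distrib_left mult.left_commute)
    also have "(\<Sum>j\<in>UNIV. A$p$j * det (\<chi> i. if i = k then axis j 1 else row i A))
        = det (\<chi> i. if i = k then (\<Sum>j\<in>UNIV. A$p$j *s axis j 1) else row i A)"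
      by (simp add: det_linear_row_sum det_row_mul)
    also have "(\<Sum>j\<in>UNIV. A$p$j *s axis j 1) = row p A"
      by (simp add: vec_eq_iff axis_def row_def if_distrib cong: if_cong)
    finally have eq: "(A ** C) $ p $ k = e * det (\<chi> i. if i = k then row p A else row i A)" .
    show ?thesis
    proof (cases "p = k")
      case True
      have "(\<chi> i. if i = k then row p A else row i A) = A"
        using True by (simp add: vec_eq_iff row_def)
      then show ?thesis using eq True assms by (simp add: mat_def mult.commute)
    next
      case False
      have "det (\<chi> i. if i = k then row p A else row i A) = 0"
        by (rule det_identical_rows[OF False]) (use False in \<open>simp add: row_def\<close>)
      then show ?thesis using eq False by (simp add: mat_def)
    qed
  qed
  then show ?thesis by (intro exI[of _ C]) (simp add: vec_eq_iff)
qed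

lemma invertible_if_det_dvd_1:
  fixes A :: "'a::comm_ring_1^'n::finite^'n"
  assumes "det A dvd 1"
  shows "invertible A"
proof -
  obtain e where "det A * e = 1" using assms by (metis dvdE)
  then obtain C where C: "A ** C = mat 1" using right_invertible_if_det_mult_eq_1 by blast
  have "det C * det A = 1" using C det_mul[of A C] by (simp add: mult.commute)
  then obtain D where D: "C ** D = mat 1" using right_invertible_if_det_mult_eq_1 by blast
  have "A = D" by (metis C D matrix_mul_assoc matrix_mul_lid matrix_mul_rid)
  with C D show ?thesis unfolding invertible_def by blast
qed

lemma invertible_matrix_vector_mult_eq_0_iff:
  fixes A :: "'a::comm_ring_1^'n::finite^'n"
  assumes "invertible A"
  shows "A *v v = 0 \<longleftrightarrow> v = 0"
proof
  assume Av: "A *v v = 0"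
  obtain B where "B ** A = mat 1" using assms unfolding invertible_def by blast
  then have "v = B *v (A *v v)" by (simp add: matrix_vector_mul_assoc)
  then show "v = 0" using Av by simp
qed simp

section \<open>First-order expansions in commutative rings\<close>

lemma dvd_power_diff:
  fixes a b :: "'b::comm_ring_1"
  assumes "q dvd a - b"
  shows "q dvd a ^ k - b ^ k"
proof (induction k)
  case (Suc k)
  have "a ^ Suc k - b ^ Suc k = a * (a ^ k - b ^ k) + (a - b) * b ^ k"
    by (simp add: algebra_simps)
  then show ?case using Suc assms by (simp add: dvd_add dvd_mult dvd_mult2)
qed simp

lemma dvd_prod_diff:
  fixes f g :: "'i \<Rightarrow> 'b::comm_ring_1"
  assumes "\<And>i. i \<in> S \<Longrightarrow> q dvd f i - g i"
  shows "q dvd prod f S - prod g S"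
  using assms
proof (induction S rule: infinite_finite_induct)
  case (insert s S)
  have "prod f (insert s S) - prod g (insert s S) = f s * (prod f S - prod g S) + (f s - g s) * prod g S"
    using insert(1,2) by (simp add: algebra_simps)
  then show ?case using insert by (simp add: dvd_add dvd_mult dvd_mult2)
qed simp_all

text \<open>In the following two lemmas the increments lie in an ideal (p) whose square is
  contained in (r), so all terms of second order in the increments vanish modulo r.\<close>

lemma power_add_first_order:
  fixes y \<delta> :: "'b::comm_ring_1"
  assumes "p dvd \<delta>" and "r dvd p * p"
  shows "r dvd (y + \<delta>) ^ k - y ^ k - of_nat k * y ^ (k - 1) * \<delta>"
proof (induction k)
  case (Suc k)
  define Q where "Q = (y + \<delta>) ^ k - y ^ k - of_nat k * y ^ (k - 1) * \<delta>"
  have yk: "of_nat k * (y * y ^ (k - 1)) = of_nat k * y ^ k"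
    by (cases k) auto
  have "(y + \<delta>) ^ Suc k - y ^ Suc k - of_nat (Suc k) * y ^ (Suc k - 1) * \<delta>
      = (y + \<delta>) * Q + of_nat k * y ^ (k - 1) * (\<delta> * \<delta>)"
    unfolding Q_def using yk by (simp add: algebra_simps)
  moreover have "r dvd \<delta> * \<delta>"
    using assms by (meson dvd_trans mult_dvd_mono)
  ultimately show ?case
    using Suc.IH unfolding Q_def by (simp add: dvd_add dvd_mult)
qed simp

lemma prod_first_order:
  fixes a b c :: "'i \<Rightarrow> 'b::comm_ring_1"
  assumes "finite S" and "r dvd p * p"
    and first_order: "\<And>i. i \<in> S \<Longrightarrow> r dvd a i - b i - c i"
    and linear_term: "\<And>i. i \<in> S \<Longrightarrow> p dvd c i"
  shows "r dvd prod a S - prod b S - (\<Sum>j\<in>S. c j * prod b (S - {j}))"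
  using assms(1) first_order linear_term
proof (induction S rule: finite_induct)
  case (insert s S)
  define A where "A = prod a S"
  define B where "B = prod b S"
  define C where "C = (\<Sum>j\<in>S. c j * prod b (S - {j}))"
  define R where "R = A - B - C"
  have R: "r dvd R" unfolding R_def A_def B_def C_def using insert by auto
  have rs: "r dvd a s - b s - c s" using insert by auto
  have cC: "r dvd c s * C"
  proof -
    have "p dvd C" unfolding C_def using insert by (auto intro!: dvd_sum dvd_mult2)
    then show ?thesis using insert assms(2) by (meson dvd_trans insertI1 mult_dvd_mono)
  qed
  have "(\<Sum>j\<in>S. c j * prod b (insert s S - {j})) = (\<Sum>j\<in>S. b s * (c j * prod b (S - {j})))"
  proof (rule sum.cong)
    fix j assume "j \<in> S"
    then have "insert s S - {j} = insert s (S - {j})" using insert by auto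
    then show "c j * prod b (insert s S - {j}) = b s * (c j * prod b (S - {j}))"
      using insert by (simp add: ac_simps)
  qed simp
  then have "(\<Sum>j\<in>insert s S. c j * prod b (insert s S - {j})) = c s * B + b s * C"
    using insert(1,2) by (simp add: sum_distrib_left C_def B_def Diff_insert_absorb)
  then have "prod a (insert s S) - prod b (insert s S) - (\<Sum>j\<in>insert s S. c j * prod b (insert s S - {j}))
      = b s * R + c s * C + c s * R + (a s - b s - c s) * (B + C + R)"
    using insert(1,2) by (simp add: A_def B_def R_def algebra_simps)
  then show ?case using R rs cC by (simp add: dvd_add dvd_mult dvd_mult2)
qed simp

section \<open>Divisibility by powers of t\<close>

lemma fps_X_power_dvd_iff:
  "fps_X ^ m dvd (f :: 'b::comm_ring_1 fps) \<longleftrightarrow> (\<forall>k<m. fps_nth f k = 0)"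
proof
  assume "fps_X ^ m dvd f"
  then obtain g where "f = fps_X ^ m * g" by (elim dvdE)
  then show "\<forall>k<m. fps_nth f k = 0" by (simp add: fps_X_power_mult_nth)
next
  assume "\<forall>k<m. fps_nth f k = 0"
  then have "f = fps_X ^ m * Abs_fps (\<lambda>k. fps_nth f (k + m))"
    by (intro fps_ext) (auto simp: fps_X_power_mult_nth)
  then show "fps_X ^ m dvd f" by (metis dvd_triv_left)
qed

lemma fps_X_power_Suc_dvd_iff:
  "fps_X ^ Suc m dvd (f :: 'b::comm_ring_1 fps) \<longleftrightarrow> fps_X ^ m dvd f \<and> fps_nth f m = 0"
  unfolding fps_X_power_dvd_iff by (auto simp: less_Suc_eq simp del: power_Suc)

lemma fps_eq_if_X_power_dvd_diff:
  fixes f g :: "'b::comm_ring_1 fps"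
  assumes "\<And>n. fps_X ^ Suc n dvd f - g"
  shows "f = g"
proof (rule fps_ext)
  fix n
  show "fps_nth f n = fps_nth g n"
    using assms[of n] by (simp add: fps_X_power_dvd_iff del: power_Suc)
qed

lemma fps_nth_mult_if_X_power_dvd:
  assumes "fps_X ^ m dvd (d :: 'b::comm_ring_1 fps)"
  shows "fps_nth (g * d) m = fps_nth g 0 * fps_nth d m"
proof -
  obtain h where h: "d = fps_X ^ m * h" using assms by (elim dvdE)
  have gd: "g * d = fps_X ^ m * (g * h)" using h by (simp add: ac_simps)
  show ?thesis by (simp only: gd) (simp add: h fps_X_power_mult_nth)
qed

lemma fps_X_power_dvd_diff_diagonal_limit:
  fixes f :: "nat \<Rightarrow> 'b::comm_ring_1 fps"
  assumes "\<And>n. fps_X ^ Suc n dvd f (Suc n) - f n"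
  shows "fps_X ^ Suc n dvd Abs_fps (\<lambda>k. fps_nth (f k) k) - f n"
proof -
  have agree: "fps_X ^ Suc m dvd f k - f m" if "m \<le> k" for m k
    using that
  proof (induction k rule: dec_induct)
    case (step k)
    have "fps_X ^ Suc m dvd fps_X ^ Suc k" using step.hyps by (intro le_imp_power_dvd) simp
    then have "fps_X ^ Suc m dvd f (Suc k) - f k" using assms dvd_trans by blast
    from dvd_add[OF this step.IH] show ?case by simp
  qed simp
  show ?thesis unfolding fps_X_power_dvd_iff
  proof (intro allI impI)
    fix k assume "k < Suc n"
    then have "fps_nth (f n - f k) k = 0"
      using agree[of k n] by (simp add: fps_X_power_dvd_iff del: power_Suc)
    then show "fps_nth (Abs_fps (\<lambda>k. fps_nth (f k) k) - f n) k = 0" by simp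
  qed
qed

section \<open>Evaluation of polynomials at power series\<close>

definition mp_monom_eval :: "('n::finite \<Rightarrow> 'b::comm_semiring_1) \<Rightarrow> ('n \<Rightarrow>\<^sub>0 nat) \<Rightarrow> 'b" where
  "mp_monom_eval x \<mu> = (\<Prod>i\<in>UNIV. x i ^ Poly_Mapping.lookup \<mu> i)"

lemma mp_eval_eq_sum_superset:
  assumes "finite S" "Poly_Mapping.keys p \<subseteq> S" "\<phi> 0 = 0"
  shows "mp_eval \<phi> x p = (\<Sum>\<mu>\<in>S. \<phi> (Poly_Mapping.lookup p \<mu>) * mp_monom_eval x \<mu>)"
  unfolding mp_eval_def mp_monom_eval_def
  by (rule sum.mono_neutral_left) (use assms in \<open>auto simp: in_keys_iff\<close>)

lemma mp_eval_add:
  assumes "\<phi> 0 = 0" "\<And>a b. \<phi> (a + b) = \<phi> a + \<phi> b"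
  shows "mp_eval \<phi> x (p + q) = mp_eval \<phi> x p + mp_eval \<phi> x q"
proof -
  let ?S = "Poly_Mapping.keys p \<union> Poly_Mapping.keys q"
  have "mp_eval \<phi> x (p + q) = (\<Sum>\<mu>\<in>?S. \<phi> (Poly_Mapping.lookup (p + q) \<mu>) * mp_monom_eval x \<mu>)"
    by (rule mp_eval_eq_sum_superset) (use assms keys_add[of p q] in auto)
  also have "\<dots> = (\<Sum>\<mu>\<in>?S. \<phi> (Poly_Mapping.lookup p \<mu>) * mp_monom_eval x \<mu>)
        + (\<Sum>\<mu>\<in>?S. \<phi> (Poly_Mapping.lookup q \<mu>) * mp_monom_eval x \<mu>)"
    by (simp add: lookup_add assms(2) distrib_right sum.distrib)
  also have "\<dots> = mp_eval \<phi> x p + mp_eval \<phi> x q"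
    by (subst (1 2) mp_eval_eq_sum_superset[where S = ?S]) (use assms in auto)
  finally show ?thesis .
qed

lemma mp_eval_sum:
  assumes "\<phi> 0 = 0" "\<And>a b. \<phi> (a + b) = \<phi> a + \<phi> b"
  shows "mp_eval \<phi> x (\<Sum>a\<in>A. f a) = (\<Sum>a\<in>A. mp_eval \<phi> x (f a))"
  by (induction A rule: infinite_finite_induct) (simp_all add: mp_eval_add assms mp_eval_def[of _ _ 0])

lemma mp_eval_single:
  assumes "\<phi> 0 = 0"
  shows "mp_eval \<phi> x (Poly_Mapping.single \<nu> c) = \<phi> c * mp_monom_eval x \<nu>"
  by (subst mp_eval_eq_sum_superset[where S = "{\<nu>}"]) (use assms in auto)

lemma mp_eval_fps_eq_sum:
  "mp_eval_fps x p = (\<Sum>\<mu>\<in>Poly_Mapping.keys p.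
     fps_const (mp_const (Poly_Mapping.lookup p \<mu>)) * mp_monom_eval x \<mu>)"
  by (simp add: mp_eval_fps_def mp_eval_def mp_monom_eval_def)

lemma mp_eval_fps_pderiv:
  fixes p :: "('n::finite, 'a::comm_ring_1) mpoly"
  shows "mp_eval_fps x (mp_pderiv j p) = (\<Sum>\<mu>\<in>Poly_Mapping.keys p.
     of_nat (Poly_Mapping.lookup \<mu> j) * fps_const (mp_const (Poly_Mapping.lookup p \<mu>))
        * mp_monom_eval x (\<mu> - Poly_Mapping.single j 1))"
proof -
  have of_nat_mult: "fps_const (mp_const (of_nat k * c)) = of_nat k * fps_const (mp_const c :: ('n, 'a) mpoly)"
    for k c
  proof -
    have "mp_const (of_nat k * c) = (of_nat k :: ('n, 'a) mpoly) * mp_const c"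
      unfolding mp_const_def single_of_nat[symmetric] mult_single by simp
    then show ?thesis by (metis fps_const_mult fps_of_nat)
  qed
  have const_zero: "fps_const (mp_const 0) = (0 :: ('n, 'a) mpoly fps)"
    by (simp add: mp_const_def)
  have const_add: "fps_const (mp_const (a + b)) = fps_const (mp_const a) + (fps_const (mp_const b) :: ('n, 'a) mpoly fps)"
    for a b by (simp add: mp_const_def single_add)
  show ?thesis
    unfolding mp_eval_fps_def mp_pderiv_def
    by (simp add: mp_eval_sum mp_eval_single of_nat_mult const_zero const_add)
qed

lemma mp_eval_fps_diff_dvd:
  fixes x y :: "'n::finite \<Rightarrow> ('n, 'a::comm_ring_1) mpoly fps"
  assumes "\<And>i. q dvd x i - y i"
  shows "q dvd mp_eval_fps x p - mp_eval_fps y p"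
proof -
  have "mp_eval_fps x p - mp_eval_fps y p
    = (\<Sum>\<mu>\<in>Poly_Mapping.keys p. fps_const (mp_const (Poly_Mapping.lookup p \<mu>))
        * (mp_monom_eval x \<mu> - mp_monom_eval y \<mu>))"
    unfolding mp_eval_fps_eq_sum by (simp add: right_diff_distrib sum_subtractf)
  also have "q dvd \<dots>"
    unfolding mp_monom_eval_def by (intro dvd_sum dvd_mult dvd_prod_diff dvd_power_diff assms)
  finally show ?thesis .
qed

lemma fps_nth_mp_monom_eval_0:
  fixes x :: "'n::finite \<Rightarrow> 'b::comm_semiring_1 fps"
  shows "fps_nth (mp_monom_eval x \<mu>) 0 = mp_monom_eval (\<lambda>i. fps_nth (x i) 0) \<mu>"
proof -
  have prod_0: "fps_nth (prod f S) 0 = (\<Prod>i\<in>S. fps_nth (f i) 0)" for f :: "'c \<Rightarrow> 'b fps" and S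
    by (induction S rule: infinite_finite_induct) auto
  show ?thesis by (simp add: mp_monom_eval_def fps_power_zeroth prod_0)
qed

lemma mp_monom_eval_mp_var:
  "mp_monom_eval mp_var \<mu> = (Poly_Mapping.single \<mu> 1 :: ('n::finite, 'a::comm_semiring_1) mpoly)"
proof -
  have var_power: "(mp_var i :: ('n, 'a) mpoly) ^ k = Poly_Mapping.single (Poly_Mapping.single i k) 1"
    for i k by (induction k) (simp_all add: mp_var_def mult_single flip: single_add)
  have "(\<Prod>i\<in>S. Poly_Mapping.single (Poly_Mapping.single i (f i)) 1 :: ('n, 'a) mpoly)
      = Poly_Mapping.single (\<Sum>i\<in>S. Poly_Mapping.single i (f i)) 1" if "finite S" for S f
    using that by (induction S rule: finite_induct) (simp_all add: mult_single)
  moreover have "(\<Sum>i\<in>UNIV. Poly_Mapping.single i (Poly_Mapping.lookup \<mu> i)) = \<mu>"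
    by (rule poly_mapping_eqI) (simp add: lookup_sum lookup_single when_def)
  ultimately show ?thesis by (simp add: mp_monom_eval_def var_power)
qed

lemma sum_keys_single_lookup:
  "(\<Sum>\<mu>\<in>Poly_Mapping.keys p. Poly_Mapping.single \<mu> (Poly_Mapping.lookup p \<mu>)) = p"
proof (rule poly_mapping_eqI)
  fix k
  show "Poly_Mapping.lookup (\<Sum>\<mu>\<in>Poly_Mapping.keys p. Poly_Mapping.single \<mu> (Poly_Mapping.lookup p \<mu>)) k
      = Poly_Mapping.lookup p k"
    by (cases "k \<in> Poly_Mapping.keys p") (auto simp: lookup_sum lookup_single when_def in_keys_iff)
qed

lemma fps_nth_mp_eval_fps_0:
  fixes x :: "'n::finite \<Rightarrow> ('n, 'a::comm_ring_1) mpoly fps"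
  assumes "\<And>i. fps_nth (x i) 0 = mp_var i"
  shows "fps_nth (mp_eval_fps x p) 0 = p"
proof -
  have "(\<lambda>i. fps_nth (x i) 0) = mp_var" using assms by auto
  then have "fps_nth (mp_eval_fps x p) 0
      = (\<Sum>\<mu>\<in>Poly_Mapping.keys p. mp_const (Poly_Mapping.lookup p \<mu>) * Poly_Mapping.single \<mu> 1)"
    by (simp add: mp_eval_fps_eq_sum fps_sum_nth fps_nth_mp_monom_eval_0 mp_monom_eval_mp_var)
  also have "\<dots> = p"
    by (simp add: mp_const_def mult_single sum_keys_single_lookup)
  finally show ?thesis .
qed

lemma mp_monom_eval_first_order:
  fixes x d :: "'n::finite \<Rightarrow> 'b::comm_ring_1"
  assumes "\<And>j. p dvd d j" and "r dvd p * p"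
  shows "r dvd mp_monom_eval (\<lambda>i. x i + d i) \<mu> - mp_monom_eval x \<mu>
     - (\<Sum>j\<in>UNIV. of_nat (Poly_Mapping.lookup \<mu> j) * mp_monom_eval x (\<mu> - Poly_Mapping.single j 1) * d j)"
proof -
  define a where "a i = (x i + d i) ^ Poly_Mapping.lookup \<mu> i" for i
  define b where "b i = x i ^ Poly_Mapping.lookup \<mu> i" for i
  define c where "c i = of_nat (Poly_Mapping.lookup \<mu> i) * x i ^ (Poly_Mapping.lookup \<mu> i - 1) * d i" for i
  have "r dvd prod a UNIV - prod b UNIV - (\<Sum>j\<in>UNIV. c j * prod b (UNIV - {j}))"
  proof (rule prod_first_order[OF _ assms(2)])
    fix i
    show "r dvd a i - b i - c i" unfolding a_def b_def c_def by (rule power_add_first_order[OF assms])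
    show "p dvd c i" unfolding c_def by (rule dvd_mult[OF assms(1)])
  qed simp
  moreover have "c j * prod b (UNIV - {j})
      = of_nat (Poly_Mapping.lookup \<mu> j) * mp_monom_eval x (\<mu> - Poly_Mapping.single j 1) * d j" for j
  proof (cases "Poly_Mapping.lookup \<mu> j = 0")
    case False
    have "mp_monom_eval x (\<mu> - Poly_Mapping.single j 1)
        = x j ^ (Poly_Mapping.lookup \<mu> j - 1) * prod b (UNIV - {j})"
      unfolding mp_monom_eval_def b_def
      by (subst prod.remove[of UNIV j]) (auto simp: lookup_minus lookup_single when_def intro!: prod.cong)
    then show ?thesis by (simp add: c_def ac_simps)
  qed (simp add: c_def)
  ultimately show ?thesis by (simp add: a_def b_def mp_monom_eval_def)
qed

lemma mp_eval_fps_first_order: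
  fixes x d :: "'n::finite \<Rightarrow> ('n, 'a::comm_ring_1) mpoly fps"
  assumes "\<And>j. p dvd d j" and "r dvd p * p"
  shows "r dvd mp_eval_fps (\<lambda>i. x i + d i) q - mp_eval_fps x q
     - (\<Sum>j\<in>UNIV. mp_eval_fps x (mp_pderiv j q) * d j)"
proof -
  let ?c = "\<lambda>\<mu>. fps_const (mp_const (Poly_Mapping.lookup q \<mu>))"
  let ?L = "\<lambda>\<mu>. \<Sum>j\<in>UNIV. of_nat (Poly_Mapping.lookup \<mu> j) * mp_monom_eval x (\<mu> - Poly_Mapping.single j 1) * d j"
  have "(\<Sum>j\<in>UNIV. mp_eval_fps x (mp_pderiv j q) * d j)
      = (\<Sum>j\<in>UNIV. \<Sum>\<mu>\<in>Poly_Mapping.keys q. ?c \<mu> *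
           (of_nat (Poly_Mapping.lookup \<mu> j) * mp_monom_eval x (\<mu> - Poly_Mapping.single j 1) * d j))"
    unfolding mp_eval_fps_pderiv sum_distrib_right by (simp add: ac_simps)
  also have "\<dots> = (\<Sum>\<mu>\<in>Poly_Mapping.keys q. ?c \<mu> * ?L \<mu>)"
    by (subst sum.swap) (simp add: sum_distrib_left)
  finally have "mp_eval_fps (\<lambda>i. x i + d i) q - mp_eval_fps x q
     - (\<Sum>j\<in>UNIV. mp_eval_fps x (mp_pderiv j q) * d j)
     = (\<Sum>\<mu>\<in>Poly_Mapping.keys q. ?c \<mu>
         * (mp_monom_eval (\<lambda>i. x i + d i) \<mu> - mp_monom_eval x \<mu> - ?L \<mu>))"
    unfolding mp_eval_fps_eq_sum by (simp add: right_diff_distrib sum_subtractf)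
  also have "r dvd \<dots>"
    by (intro dvd_sum dvd_mult mp_monom_eval_first_order[where p = p] assms)
  finally show ?thesis .
qed

section \<open>Lifting solutions degree by degree\<close>

definition jacobian_matrix :: "('n::finite \<Rightarrow> ('n, 'a::comm_ring_1) mpoly) \<Rightarrow> ('n, 'a) mpoly^'n^'n" where
  "jacobian_matrix F = (\<chi> i j. mp_pderiv j (F i))"

lemma det_jacobian_matrix: "det (jacobian_matrix F) = jacobian_det F"
  by (simp add: jacobian_matrix_def jacobian_det_def)

lemma fps_nth_mp_eval_fps_perturbation:
  fixes U d :: "'n::finite \<Rightarrow> ('n, 'a::comm_ring_1) mpoly fps"
  assumes U0: "\<And>i. fps_nth (U i) 0 = mp_var i"
    and "m \<ge> 1" and d: "\<And>j. fps_X ^ m dvd d j"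
  shows "fps_nth (mp_eval_fps (\<lambda>i. U i + d i) (F i)) m
    = fps_nth (mp_eval_fps U (F i)) m + (jacobian_matrix F *v (\<chi> j. fps_nth (d j) m)) $ i"
proof -
  define S where "S = (\<Sum>j\<in>UNIV. mp_eval_fps U (mp_pderiv j (F i)) * d j)"
  have "fps_X ^ Suc m dvd fps_X ^ m * fps_X ^ m"
    unfolding power_add[symmetric] using \<open>m \<ge> 1\<close> by (intro le_imp_power_dvd) simp
  then have "fps_X ^ Suc m dvd mp_eval_fps (\<lambda>i. U i + d i) (F i) - mp_eval_fps U (F i) - S"
    unfolding S_def by (rule mp_eval_fps_first_order[OF d])
  then have "fps_nth (mp_eval_fps (\<lambda>i. U i + d i) (F i) - mp_eval_fps U (F i) - S) m = 0"
    by (simp add: fps_X_power_dvd_iff del: power_Suc)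
  moreover have "fps_nth S m = (jacobian_matrix F *v (\<chi> j. fps_nth (d j) m)) $ i"
    unfolding S_def fps_sum_nth fps_nth_mult_if_X_power_dvd[OF d] fps_nth_mp_eval_fps_0[OF U0]
    by (simp add: matrix_vector_mult_def jacobian_matrix_def)
  ultimately show ?thesis by (simp add: algebra_simps)
qed

lemma mp_eval_fps_inj:
  fixes U W :: "'n::finite \<Rightarrow> ('n, 'a::comm_ring_1) mpoly fps"
  assumes J: "invertible (jacobian_matrix F)"
    and U0: "\<And>i. fps_nth (U i) 0 = mp_var i" and W0: "\<And>i. fps_nth (W i) 0 = mp_var i"
    and eq: "\<And>i. mp_eval_fps U (F i) = mp_eval_fps W (F i)"
  shows "U = W"
proof -
  have "\<forall>i. fps_X ^ Suc n dvd W i - U i" for n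
  proof (induction n)
    case 0
    show ?case unfolding fps_X_power_dvd_iff using U0 W0 by simp
  next
    case (Suc n)
    define d where "d j = W j - U j" for j
    define v where "v = (\<chi> j. fps_nth (d j) (Suc n))"
    have d: "fps_X ^ Suc n dvd d j" for j using Suc d_def by auto
    have "W = (\<lambda>i. U i + d i)" by (simp add: d_def)
    then have "(jacobian_matrix F *v v) $ i = 0" for i
      using fps_nth_mp_eval_fps_perturbation[where d = d and m = "Suc n" and F = F and i = i, OF U0 _ d]
        eq[of i]
      by (simp add: v_def)
    then have "jacobian_matrix F *v v = 0" by (simp add: vec_eq_iff)
    then have "v = 0" using invertible_matrix_vector_mult_eq_0_iff[OF J] by blast
    then show ?case
      using d by (simp add: fps_X_power_Suc_dvd_iff[of "Suc n"] v_def vec_eq_iff d_def del: power_Suc)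
  qed
  then have "W i = U i" for i by (intro fps_eq_if_X_power_dvd_diff) blast
  then show "U = W" by auto
qed

lemma mp_eval_fps_newton_step:
  fixes U :: "'n::finite \<Rightarrow> ('n, 'a::comm_ring_1) mpoly fps"
  assumes J: "invertible (jacobian_matrix F)" and U0: "\<And>i. fps_nth (U i) 0 = mp_var i"
    and "m \<ge> 1" and approx: "\<And>i. fps_X ^ m dvd mp_eval_fps U (F i) - G i"
  shows "\<exists>d. (\<forall>j. fps_X ^ m dvd d j)
           \<and> (\<forall>i. fps_X ^ Suc m dvd mp_eval_fps (\<lambda>i. U i + d i) (F i) - G i)"
proof -
  obtain Ji where Ji: "jacobian_matrix F ** Ji = mat 1" using J unfolding invertible_def by blast
  define r where "r = (\<chi> j. fps_nth (G j - mp_eval_fps U (F j)) m)"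
  define d where "d j = fps_X ^ m * fps_const ((Ji *v r) $ j)" for j
  have d: "fps_X ^ m dvd d j" for j by (simp add: d_def)
  have "fps_X ^ Suc m dvd mp_eval_fps (\<lambda>i. U i + d i) (F i) - G i" for i
  proof -
    have "fps_X ^ m dvd mp_eval_fps (\<lambda>i. U i + d i) (F i) - mp_eval_fps U (F i)"
      using d by (intro mp_eval_fps_diff_dvd) simp
    from dvd_add[OF this approx[of i]]
    have "fps_X ^ m dvd mp_eval_fps (\<lambda>i. U i + d i) (F i) - G i" by simp
    moreover have "(\<chi> j. fps_nth (d j) m) = Ji *v r"
      by (simp add: d_def vec_eq_iff)
    with fps_nth_mp_eval_fps_perturbation[OF U0 \<open>m \<ge> 1\<close> d, where F = F and i = i]
    have "fps_nth (mp_eval_fps (\<lambda>i. U i + d i) (F i)) m = fps_nth (G i) m"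
      by (simp add: matrix_vector_mul_assoc Ji r_def)
    ultimately show ?thesis by (simp add: fps_X_power_Suc_dvd_iff del: power_Suc)
  qed
  with d show ?thesis by blast
qed

lemma mp_eval_fps_solvable:
  fixes F :: "'n::finite \<Rightarrow> ('n, 'a::comm_ring_1) mpoly"
  assumes J: "invertible (jacobian_matrix F)" and G0: "\<And>i. fps_nth (G i) 0 = F i"
  shows "\<exists>U. (\<forall>i. mp_eval_fps U (F i) = G i) \<and> (\<forall>i. fps_nth (U i) 0 = mp_var i)"
proof -
  define approx where "approx n V \<longleftrightarrow> (\<forall>i. fps_nth (V i) 0 = mp_var i)
      \<and> (\<forall>i. fps_X ^ Suc n dvd mp_eval_fps V (F i) - G i)" for n V
  have X0: "fps_nth (mp_eval_fps (\<lambda>i. fps_const (mp_var i)) p) 0 = p" for p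
    by (rule fps_nth_mp_eval_fps_0) simp
  have "approx 0 (\<lambda>i. fps_const (mp_var i))"
    unfolding approx_def fps_X_power_dvd_iff by (simp add: X0 G0)
  moreover have "\<exists>V'. approx (Suc n) V' \<and> (\<forall>i. fps_X ^ Suc n dvd V' i - V i)"
    if "approx n V" for n V
  proof -
    obtain d where d: "\<And>j. fps_X ^ Suc n dvd d j"
      and "\<And>i. fps_X ^ Suc (Suc n) dvd mp_eval_fps (\<lambda>i. V i + d i) (F i) - G i"
      using mp_eval_fps_newton_step[OF J, of V "Suc n" G] \<open>approx n V\<close>
      unfolding approx_def by auto
    moreover have "fps_nth (d i) 0 = 0" for i
      using d[of i] by (simp add: fps_X_power_dvd_iff del: power_Suc)
    ultimately show ?thesis
      using \<open>approx n V\<close> unfolding approx_def by (intro exI[of _ "\<lambda>i. V i + d i"]) auto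
  qed
  ultimately obtain V where V: "\<And>n. approx n (V n)"
    and V_Suc: "\<And>n i. fps_X ^ Suc n dvd V (Suc n) i - V n i"
    using dependent_nat_choice[of approx "\<lambda>n V V'. \<forall>i. fps_X ^ Suc n dvd V' i - V i"] by metis
  define U where "U i = Abs_fps (\<lambda>k. fps_nth (V k i) k)" for i
  have UV: "fps_X ^ Suc n dvd U i - V n i" for n i
    unfolding U_def by (rule fps_X_power_dvd_diff_diagonal_limit) (rule V_Suc)
  have "mp_eval_fps U (F i) = G i" for i
  proof (rule fps_eq_if_X_power_dvd_diff)
    fix n
    have "fps_X ^ Suc n dvd mp_eval_fps U (F i) - mp_eval_fps (V n) (F i)"
      using UV by (rule mp_eval_fps_diff_dvd)
    moreover have "fps_X ^ Suc n dvd mp_eval_fps (V n) (F i) - G i"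
      using V[of n] unfolding approx_def by blast
    ultimately show "fps_X ^ Suc n dvd mp_eval_fps U (F i) - G i"
      using dvd_add by fastforce
  qed
  moreover have "fps_nth (U i) 0 = mp_var i" for i
    using V[of 0] by (simp add: U_def approx_def)
  ultimately show ?thesis by blast
qed

theorem theorem4p1:
  fixes F :: "'n::finite \<Rightarrow> ('n, 'a::field_char_0) mpoly"
  assumes "CARD('n) \<ge> 2"
    and "\<exists>c. c \<noteq> 0 \<and> jacobian_det F = mp_const c"
  shows "\<exists>!U :: 'n \<Rightarrow> ('n, 'a) mpoly fps.
           (\<forall>i. mp_eval_fps U (F i)
                  = fps_X * fps_const (mp_var i) + (1 - fps_X) * fps_const (F i))
         \<and> (\<forall>i. fps_nth (U i) 0 = mp_var i)"
proof -
  obtain c where "c \<noteq> 0" and "jacobian_det F = mp_const c" using assms(2) by blast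
  then have "det (jacobian_matrix F) * mp_const (1 / c) = 1"
    by (simp add: det_jacobian_matrix mp_const_def mult_single)
  then have J: "invertible (jacobian_matrix F)"
    by (metis dvdI invertible_if_det_dvd_1)
  obtain U where "\<forall>i. mp_eval_fps U (F i) = fps_X * fps_const (mp_var i) + (1 - fps_X) * fps_const (F i)"
    and "\<forall>i. fps_nth (U i) 0 = mp_var i"
    using mp_eval_fps_solvable[OF J, of "\<lambda>i. fps_X * fps_const (mp_var i) + (1 - fps_X) * fps_const (F i)"]
    by simp blast
  then show ?thesis
    using mp_eval_fps_inj[OF J] by (intro ex1I[of _ U]) auto
qed

end
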